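(* Let $(T,\mathbf{m})$ be a tree with vertex capacities. If $(T,\mathbf{m})$ admits an inversion function, then the type-selected Coxeter-like complex $\Delta_{(T,\mathbf{m})}$ is shellable.
   Context: A tree with capacities $(T,\mathbf{m})$ is a finite tree $T$ together with a nonnegative integer $\mathrm{cap}(v)$ for each vertex $v$; let $N=\sum_{v}\mathrm{cap}(v)$. The complex $\Delta_{(T,\mathbf{m})}$ (the Coxeter-like complex of $S_N/(S_{\mathrm{cap}(v_1)}\times\cdots\times S_{\mathrm{cap}(v_n)})$ with generators the transpositions corresponding to edges of $T$) has as faces the following data: a set $E^C(F)$ of edges of $T$ to delete, and an assignment to each connected component $C$ of the resulting forest of exactly $\sum_{v\in C}\mathrm{cap}(v)$ labels from $[N]$, each label assigned to exactly one component; $\dim F=|E^C(F)|-1$, and $\sigma\subseteq\tau$ iff $\sigma$ is obtained from $\tau$ by merging neighboring components (uniting their label sets). It is a simplicial complex whose facets correspond to labellings of $T$ assigning $\mathrm{cap}(v)$ labels to each vertex $v$. To a face $F$ associate the labelled tree $T(F)$ whose vertices are the components of $T$ minus $E^C(F)$ (labelled by their label sets, with capacity the sum of the capacities of their vertices) and whose edges are the edges of $E^C(F)$. An inversion function for $(T,\mathbf{m})$ is a function $I$ assigning to each face $F$ a set $I(F)$ of pairs of neighboring vertices of $T(F)$ (its inversion pairs), such that for each face $\tau$ and neighboring components $C_1,C_2$ of $T(\tau)$ there is a unique redistribution of the labels collectively assigned to $C_1,C_2$ (keeping the number of labels on each) for which the resulting $\tau'$ has $(C_1,C_2)\notin I(\tau')$;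 for $(i,j)\in I(\tau)$ write $(i,j)\tau$ for this redistributed labelling. On facets (labellings of $T$) set $(i,j)\tau\prec_{weak}\tau$ for each $(i,j)\in I(\tau)$ with $i,j$ neighbors in $T$. The following must hold: (1) each face $F$ is contained in a unique facet which is inversion-free on its restriction to each component of $F$ (i.e. has no inversion pair of vertices lying in a common component of $T$ minus $E^C(F)$); (2) the transitive closure of $\prec_{weak}$ is a partial order; (3) these properties also hold on the restriction to any subforest of $T$. A shelling of a simplicial complex is a total order $F_1,\dots,F_r$ of its facets such that for each $k>1$, $\overline{F_k}\cap\bigcup_{j<k}\overline{F_j}$ is a pure codimension-one subcomplex of $\overline{F_k}$, where $\overline{F}$ is the complex of all faces of $F$. *)

theory Defs
  imports Main
begin

text \<open>A graph is given by a vertex set V and a set E of 2-element vertex sets (edges).\<close>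

definition adj :: "'v set set \<Rightarrow> ('v \<times> 'v) set" where
  "adj Es = {(u, v). {u, v} \<in> Es}"

definition comp :: "'v set set \<Rightarrow> 'v \<Rightarrow> 'v set" where
  "comp Es v = {w. (v, w) \<in> (adj Es)\<^sup>*}"

definition comps :: "'v set \<Rightarrow> 'v set set \<Rightarrow> 'v set set" where
  "comps V Es = comp Es ` V"

text \<open>A finite tree: nonempty, connected, and every edge is a bridge (acyclic).\<close>
definition is_tree :: "'v set \<Rightarrow> 'v set set \<Rightarrow> bool" where
  "is_tree V E \<longleftrightarrow> finite V \<and> V \<noteq> {} \<and>
     (\<forall>e\<in>E. \<exists>u v. e = {u, v} \<and> u \<noteq> v \<and> u \<in> V \<and> v \<in> V) \<and>
     (\<forall>u\<in>V. \<forall>v\<in>V. (u, v) \<in> (adj E)\<^sup>*) \<and>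
     (\<forall>e\<in>E. \<forall>u v. e = {u, v} \<longrightarrow> (u, v) \<notin> (adj (E - {e}))\<^sup>*)"

text \<open>A face: the set of deleted edges E^C(F), together with the assignment of a label set
  to each connected component of the resulting forest (empty outside components).\<close>
type_synonym 'v face = "'v set set \<times> ('v set \<Rightarrow> nat set)"

definition fcomps :: "'v set \<Rightarrow> 'v set set \<Rightarrow> 'v face \<Rightarrow> 'v set set" where
  "fcomps V E F = comps V (E - fst F)"

definition faces :: "'v set \<Rightarrow> 'v set set \<Rightarrow> ('v \<Rightarrow> nat) \<Rightarrow> 'v face set" where
  "faces V E cap = {(D, L). D \<subseteq> E \<and>
     (\<forall>C. C \<notin> comps V (E - D) \<longrightarrow> L C = {}) \<and>
     (\<forall>C\<in>comps V (E - D). L C \<subseteq> {1..sum cap V} \<and> card (L C) = sum cap C) \<and>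
     (\<forall>i\<in>{1..sum cap V}. \<exists>!C. C \<in> comps V (E - D) \<and> i \<in> L C)}"

text \<open>\<open>\<sigma> \<subseteq> \<tau>\<close>: \<open>\<sigma>\<close> arises from \<open>\<tau>\<close> by merging neighbouring components (uniting label sets).\<close>
definition face_le :: "'v set \<Rightarrow> 'v set set \<Rightarrow> 'v face \<Rightarrow> 'v face \<Rightarrow> bool" where
  "face_le V E \<sigma> \<tau> \<longleftrightarrow> fst \<sigma> \<subseteq> fst \<tau> \<and>
     (\<forall>C\<in>fcomps V E \<sigma>. snd \<sigma> C = \<Union>{snd \<tau> C' | C'. C' \<in> fcomps V E \<tau> \<and> C' \<subseteq> C})"

definition face_dim :: "'v face \<Rightarrow> int" where
  "face_dim F = int (card (fst F)) - 1"

text \<open>Facets of \<open>\<Delta>_(T,m)\<close>: labellings of T (all edges deleted, components are single vertices).\<close>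
definition tfacets :: "'v set \<Rightarrow> 'v set set \<Rightarrow> ('v \<Rightarrow> nat) \<Rightarrow> 'v face set" where
  "tfacets V E cap = {F \<in> faces V E cap. fst F = E}"

definition facets_of :: "'f set \<Rightarrow> ('f \<Rightarrow> 'f \<Rightarrow> bool) \<Rightarrow> 'f set" where
  "facets_of K le = {F \<in> K. \<forall>G\<in>K. le F G \<longrightarrow> G = F}"

definition closure_of_face :: "'f set \<Rightarrow> ('f \<Rightarrow> 'f \<Rightarrow> bool) \<Rightarrow> 'f \<Rightarrow> 'f set" where
  "closure_of_face K le F = {G \<in> K. le G F}"

definition pure_of_dim :: "'f set \<Rightarrow> ('f \<Rightarrow> 'f \<Rightarrow> bool) \<Rightarrow> ('f \<Rightarrow> int) \<Rightarrow> int \<Rightarrow> bool" where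
  "pure_of_dim Q le dim d \<longleftrightarrow> (\<forall>G\<in>Q. (\<forall>H\<in>Q. le G H \<longrightarrow> H = G) \<longrightarrow> dim G = d)"

definition is_shelling :: "'f set \<Rightarrow> ('f \<Rightarrow> 'f \<Rightarrow> bool) \<Rightarrow> ('f \<Rightarrow> int) \<Rightarrow> 'f list \<Rightarrow> bool" where
  "is_shelling K le dim Fs \<longleftrightarrow> distinct Fs \<and> set Fs = facets_of K le \<and>
     (\<forall>k. 0 < k \<and> k < length Fs \<longrightarrow>
        pure_of_dim (closure_of_face K le (Fs ! k) \<inter> (\<Union>j<k. closure_of_face K le (Fs ! j)))
                    le dim (dim (Fs ! k) - 1))"

definition shellable :: "'f set \<Rightarrow> ('f \<Rightarrow> 'f \<Rightarrow> bool) \<Rightarrow> ('f \<Rightarrow> int) \<Rightarrow> bool" where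
  "shellable K le dim \<longleftrightarrow> (\<exists>Fs. is_shelling K le dim Fs)"

text \<open>Ordered pairs of neighbouring vertices of T(F) (components joined by a deleted edge).\<close>
definition nbrs :: "'v set \<Rightarrow> 'v set set \<Rightarrow> 'v face \<Rightarrow> ('v set \<times> 'v set) set" where
  "nbrs V E F = {(C1, C2). C1 \<in> fcomps V E F \<and> C2 \<in> fcomps V E F \<and> C1 \<noteq> C2 \<and>
                  (\<exists>u\<in>C1. \<exists>v\<in>C2. {u, v} \<in> fst F)}"

definition redist :: "'v set \<Rightarrow> 'v set set \<Rightarrow> ('v \<Rightarrow> nat) \<Rightarrow> 'v face \<Rightarrow> 'v set \<Rightarrow> 'v set \<Rightarrow> 'v face set" where
  "redist V E cap \<tau> C1 C2 = {\<tau>' \<in> faces V E cap. fst \<tau>' = fst \<tau> \<and>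
      (\<forall>C. C \<noteq> C1 \<and> C \<noteq> C2 \<longrightarrow> snd \<tau>' C = snd \<tau> C)}"

definition swap_inv :: "'v set \<Rightarrow> 'v set set \<Rightarrow> ('v \<Rightarrow> nat) \<Rightarrow> ('v face \<Rightarrow> ('v set \<times> 'v set) set)
                        \<Rightarrow> 'v face \<Rightarrow> 'v set \<Rightarrow> 'v set \<Rightarrow> 'v face" where
  "swap_inv V E cap I \<tau> i j = (THE \<tau>'. \<tau>' \<in> redist V E cap \<tau> i j \<and> (i, j) \<notin> I \<tau>')"

text \<open>Weak order steps on facets, using only inversion pairs along edges in S
  (S = E gives the relation \<open>\<prec>_weak\<close> of T; general S \<subseteq> E its restriction to the subforest (V,S)).
  As pairs (smaller, larger).\<close>
definition weak_step :: "'v set \<Rightarrow> 'v set set \<Rightarrow> ('v \<Rightarrow> nat) \<Rightarrow> ('v face \<Rightarrow> ('v set \<times> 'v set) set)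
                         \<Rightarrow> 'v set set \<Rightarrow> ('v face \<times> 'v face) set" where
  "weak_step V E cap I S = {(swap_inv V E cap I \<tau> i j, \<tau>) | \<tau> i j.
       \<tau> \<in> tfacets V E cap \<and> (i, j) \<in> I \<tau> \<and> i \<union> j \<in> S}"

definition inv_props_on :: "'v set \<Rightarrow> 'v set set \<Rightarrow> ('v \<Rightarrow> nat) \<Rightarrow> ('v face \<Rightarrow> ('v set \<times> 'v set) set)
                            \<Rightarrow> 'v set set \<Rightarrow> bool" where
  "inv_props_on V E cap I S \<longleftrightarrow>
     (\<forall>F\<in>faces V E cap. E - S \<subseteq> fst F \<longrightarrow>
        (\<exists>!G. G \<in> tfacets V E cap \<and> face_le V E F G \<and>
              (\<forall>(a, b)\<in>I G. a \<union> b \<in> S \<longrightarrow> \<not> (\<exists>C\<in>fcomps V E F. a \<subseteq> C \<and> b \<subseteq> C)))) \<and>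
     trans ((weak_step V E cap I S)\<^sup>+) \<and> irrefl ((weak_step V E cap I S)\<^sup>+)"

definition inversion_function :: "'v set \<Rightarrow> 'v set set \<Rightarrow> ('v \<Rightarrow> nat)
                                  \<Rightarrow> ('v face \<Rightarrow> ('v set \<times> 'v set) set) \<Rightarrow> bool" where
  "inversion_function V E cap I \<longleftrightarrow>
     (\<forall>F\<in>faces V E cap. I F \<subseteq> nbrs V E F) \<and>
     (\<forall>\<tau>\<in>faces V E cap. \<forall>(C1, C2)\<in>nbrs V E \<tau>.
         \<exists>!\<tau>'. \<tau>' \<in> redist V E cap \<tau> C1 C2 \<and> (C1, C2) \<notin> I \<tau>') \<and>
     (\<forall>S. S \<subseteq> E \<longrightarrow> inv_props_on V E cap I S)"

end

theory Submission
  imports Defs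
begin

(*
  Order the facets (labellings of T) by a linear extension of the transitive closure of the
  weak order. For a face G below a facet \<sigma>, undoing an inversion of \<sigma> along an edge inside
  a component of G gives a facet that is still above G and weakly smaller; so the unique
  facet above G without such inversions (property (1)) precedes every other facet above G.
  Hence if G lies below the k-th facet \<tau> and an earlier one, \<tau> has an inversion along an
  edge e inside a component of G. Such an edge is not deleted in G, so G lies below the
  codimension-one face of \<tau> that deletes all edges but e, and this face also lies below
  the earlier facet (i,j)\<tau>. A maximal G in the intersection is therefore that face.
*)

lemma sym_adj: "sym (adj Es)"
  unfolding adj_def sym_def by (auto simp: insert_commute)

lemma mem_comp_self [simp]: "v \<in> comp Es v"
  by (simp add: comp_def)

lemma comp_eq_if_mem:
  assumes "w \<in> comp Es v"
  shows "comp Es w = comp Es v"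
proof -
  have vw: "(v, w) \<in> (adj Es)\<^sup>*"
    using assms by (simp add: comp_def)
  then have "(w, v) \<in> (adj Es)\<^sup>*"
    using sym_adj sym_rtrancl symD by metis
  with vw show ?thesis
    unfolding comp_def by (auto intro: rtrancl_trans)
qed

lemma comps_empty: "comps V {} = (\<lambda>v. {v}) ` V"
  by (simp add: comps_def comp_def adj_def)

lemma adj_mono: "Es \<subseteq> Es' \<Longrightarrow> adj Es \<subseteq> adj Es'"
  by (auto simp: adj_def)

lemma comp_mono: "Es \<subseteq> Es' \<Longrightarrow> comp Es v \<subseteq> comp Es' v"
  unfolding comp_def by (drule adj_mono, drule rtrancl_mono) blast

lemma comp_subset:
  assumes "\<forall>e\<in>Es. e \<subseteq> V" "v \<in> V"
  shows "comp Es v \<subseteq> V"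
proof
  fix w assume "w \<in> comp Es v"
  then have "(v, w) \<in> (adj Es)\<^sup>*"
    by (simp add: comp_def)
  then show "w \<in> V"
    by induction (use assms in \<open>auto simp: adj_def\<close>)
qed

lemma rtrancl_adj_if_mem_comps:
  assumes "C \<in> comps V Es" "u \<in> C" "v \<in> C"
  shows "(u, v) \<in> (adj Es)\<^sup>*"
proof -
  obtain x where "C = comp Es x"
    using assms(1) by (auto simp: comps_def)
  with assms(2,3) have "v \<in> comp Es u"
    using comp_eq_if_mem by metis
  then show ?thesis
    by (simp add: comp_def)
qed

lemma mem_comps_iff_if_rtrancl:
  assumes "(u, v) \<in> (adj Es)\<^sup>*" "C \<in> comps V Es"
  shows "u \<in> C \<longleftrightarrow> v \<in> C"
proof -
  obtain x where C: "C = comp Es x"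
    using assms(2) by (auto simp: comps_def)
  have "(v, u) \<in> (adj Es)\<^sup>*"
    using assms(1) sym_adj sym_rtrancl symD by metis
  with assms(1) show ?thesis
    unfolding C comp_def by (blast intro: rtrancl_trans)
qed

lemma Union_over_singletons:
  assumes "C \<subseteq> V"
  shows "\<Union>{f C' | C'. C' \<in> (\<lambda>v. {v}) ` V \<and> C' \<subseteq> C} = (\<Union>w\<in>C. f {w})"
  using assms by blast

lemma linear_extension_list:
  assumes "finite A" "trans R" "irrefl R"
  obtains xs where "distinct xs" "set xs = A"
    "\<And>i j. i < length xs \<Longrightarrow> j < length xs \<Longrightarrow> (xs ! i, xs ! j) \<in> R \<Longrightarrow> i < j"
proof -
  define rank where "rank x = card {y \<in> A. (y, x) \<in> R}" for x
  have rank_less: "rank x < rank y" if "x \<in> A" "(x, y) \<in> R" for x y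
  proof -
    have "{z \<in> A. (z, x) \<in> R} \<subset> {z \<in> A. (z, y) \<in> R}"
      using that assms(2,3) by (auto simp: irrefl_def dest: transD)
    then show ?thesis
      unfolding rank_def using assms(1) by (simp add: psubset_card_mono)
  qed
  obtain ys where ys: "set ys = A" "distinct ys"
    using finite_distinct_list[OF assms(1)] by blast
  define xs where "xs = sort_key rank ys"
  have xs: "distinct xs" "set xs = A" "sorted (map rank xs)"
    using ys by (simp_all add: xs_def)
  show thesis
  proof (rule that[OF xs(1,2)])
    fix i j assume ij: "i < length xs" "j < length xs" "(xs ! i, xs ! j) \<in> R"
    then have "rank (xs ! i) < rank (xs ! j)"
      using rank_less xs(2) nth_mem by blast
    moreover have "j \<le> i \<Longrightarrow> rank (xs ! j) \<le> rank (xs ! i)"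
      using sorted_nth_mono[OF xs(3)] ij(1) by fastforce
    ultimately show "i < j"
      by linarith
  qed
qed

text \<open>The face with deleted edges D lying below the facet \<sigma>; by face_eq_coarsen every face
  below \<sigma> is of this form.\<close>

definition coarsen :: "'v set \<Rightarrow> 'v set set \<Rightarrow> 'v face \<Rightarrow> 'v set set \<Rightarrow> 'v face" where
  "coarsen V E \<sigma> D = (D, \<lambda>C. if C \<in> comps V (E - D) then (\<Union>w\<in>C. snd \<sigma> {w}) else {})"

definition inversion_free_on :: "'v set \<Rightarrow> 'v set set \<Rightarrow> ('v face \<Rightarrow> ('v set \<times> 'v set) set)
                                 \<Rightarrow> 'v face \<Rightarrow> 'v face \<Rightarrow> bool" where
  "inversion_free_on V E I F \<sigma> \<longleftrightarrow>
     (\<forall>(a, b)\<in>I \<sigma>. a \<union> b \<in> E \<longrightarrow> \<not> (\<exists>C\<in>fcomps V E F. a \<subseteq> C \<and> b \<subseteq> C))"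

lemma faces_iff: "F \<in> faces V E cap \<longleftrightarrow> fst F \<subseteq> E \<and>
     (\<forall>C. C \<notin> comps V (E - fst F) \<longrightarrow> snd F C = {}) \<and>
     (\<forall>C\<in>comps V (E - fst F). snd F C \<subseteq> {1..sum cap V} \<and> card (snd F C) = sum cap C) \<and>
     (\<forall>i\<in>{1..sum cap V}. \<exists>!C. C \<in> comps V (E - fst F) \<and> i \<in> snd F C)"
  by (simp only: faces_def mem_Collect_eq case_prod_beta)

lemma tfacets_iff: "\<sigma> \<in> tfacets V E cap \<longleftrightarrow> fst \<sigma> = E \<and>
     (\<forall>C. C \<notin> (\<lambda>v. {v}) ` V \<longrightarrow> snd \<sigma> C = {}) \<and>
     (\<forall>C\<in>(\<lambda>v. {v}) ` V. snd \<sigma> C \<subseteq> {1..sum cap V} \<and> card (snd \<sigma> C) = sum cap C) \<and>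
     (\<forall>i\<in>{1..sum cap V}. \<exists>!C. C \<in> (\<lambda>v. {v}) ` V \<and> i \<in> snd \<sigma> C)"
proof (cases "fst \<sigma> = E")
  case True
  then have "comps V (E - fst \<sigma>) = (\<lambda>v. {v}) ` V"
    by (simp add: comps_empty)
  with True show ?thesis
    unfolding tfacets_def mem_Collect_eq faces_iff by (simp only: subset_refl simp_thms)
qed (simp add: tfacets_def)

locale tree_with_inversion_function =
  fixes V :: "'v set" and E :: "'v set set" and cap :: "'v \<Rightarrow> nat"
    and I :: "'v face \<Rightarrow> ('v set \<times> 'v set) set"
  assumes tree: "is_tree V E" and inversion_function: "inversion_function V E cap I"
begin

abbreviation "N \<equiv> sum cap V"
abbreviation "weak \<equiv> weak_step V E cap I E"

lemma finite_V: "finite V"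
  using tree by (simp add: is_tree_def)

lemma edges_subset_V:
  assumes "e \<in> E"
  shows "e \<subseteq> V"
proof -
  obtain u v where "e = {u, v}" "u \<in> V" "v \<in> V"
    using tree assms unfolding is_tree_def by (elim conjE) (drule (1) bspec, blast)
  then show ?thesis
    by simp
qed

lemma finite_E: "finite E"
proof (rule finite_subset)
  show "E \<subseteq> Pow V"
    using edges_subset_V by blast
qed (simp add: finite_V)

lemma comps_subset_V:
  assumes "C \<in> comps V Es" "Es \<subseteq> E"
  shows "C \<subseteq> V"
  using assms comp_subset[of Es V] edges_subset_V unfolding comps_def by blast

lemma faces_fst_subset: "G \<in> faces V E cap \<Longrightarrow> fst G \<subseteq> E"
  by (simp add: faces_iff)

lemma facet_labels_subset: "\<sigma> \<in> tfacets V E cap \<Longrightarrow> w \<in> V \<Longrightarrow> snd \<sigma> {w} \<subseteq> {1..N}"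
  by (simp add: tfacets_iff)

lemma card_facet_labels: "\<sigma> \<in> tfacets V E cap \<Longrightarrow> w \<in> V \<Longrightarrow> card (snd \<sigma> {w}) = cap w"
  by (simp add: tfacets_iff)

lemma facet_labels_outside: "\<sigma> \<in> tfacets V E cap \<Longrightarrow> C \<notin> (\<lambda>v. {v}) ` V \<Longrightarrow> snd \<sigma> C = {}"
  by (simp add: tfacets_iff)

lemma facet_label_exists:
  assumes "\<sigma> \<in> tfacets V E cap" "i \<in> {1..N}"
  obtains w where "w \<in> V" "i \<in> snd \<sigma> {w}"
  using assms unfolding tfacets_iff by blast

lemma facet_label_unique:
  assumes "\<sigma> \<in> tfacets V E cap" "w \<in> V" "w' \<in> V" "i \<in> snd \<sigma> {w}" "i \<in> snd \<sigma> {w'}"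
  shows "w = w'"
proof -
  have "i \<in> {1..N}"
    using facet_labels_subset assms(1,2,4) by blast
  then have "\<exists>!C. C \<in> (\<lambda>v. {v}) ` V \<and> i \<in> snd \<sigma> C"
    using assms(1) by (simp add: tfacets_iff)
  then show ?thesis
    using assms(2-5) by blast
qed

lemma facet_in_faces: "\<sigma> \<in> tfacets V E cap \<Longrightarrow> \<sigma> \<in> faces V E cap"
  by (simp add: tfacets_def)

lemma fcomps_facet: "\<sigma> \<in> tfacets V E cap \<Longrightarrow> fcomps V E \<sigma> = (\<lambda>v. {v}) ` V"
  by (simp add: tfacets_def fcomps_def comps_empty)

lemma coarsen_in_faces:
  assumes \<sigma>: "\<sigma> \<in> tfacets V E cap" and D: "D \<subseteq> E"
  shows "coarsen V E \<sigma> D \<in> faces V E cap"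
  unfolding faces_iff
proof (intro conjI ballI allI impI)
  show "fst (coarsen V E \<sigma> D) \<subseteq> E"
    using D by (simp add: coarsen_def)
next
  fix C assume "C \<notin> comps V (E - fst (coarsen V E \<sigma> D))"
  then show "snd (coarsen V E \<sigma> D) C = {}"
    by (simp add: coarsen_def)
next
  fix C assume "C \<in> comps V (E - fst (coarsen V E \<sigma> D))"
  then have C: "C \<in> comps V (E - D)" and labels: "snd (coarsen V E \<sigma> D) C = (\<Union>w\<in>C. snd \<sigma> {w})"
    by (simp_all add: coarsen_def)
  have CV: "C \<subseteq> V"
    using C comps_subset_V by blast
  then show "snd (coarsen V E \<sigma> D) C \<subseteq> {1..N}"
    using labels facet_labels_subset[OF \<sigma>] by auto
  have "card (\<Union>w\<in>C. snd \<sigma> {w}) = (\<Sum>w\<in>C. card (snd \<sigma> {w}))"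
  proof (rule card_UN_disjoint)
    show "finite C"
      using CV finite_V finite_subset by blast
    show "\<forall>w\<in>C. finite (snd \<sigma> {w})"
      using CV facet_labels_subset[OF \<sigma>] finite_subset by blast
    show "\<forall>w\<in>C. \<forall>w'\<in>C. w \<noteq> w' \<longrightarrow> snd \<sigma> {w} \<inter> snd \<sigma> {w'} = {}"
      using CV facet_label_unique[OF \<sigma>] by blast
  qed
  also have "\<dots> = sum cap C"
    using CV card_facet_labels[OF \<sigma>] by (intro sum.cong) auto
  finally show "card (snd (coarsen V E \<sigma> D) C) = sum cap C"
    using labels by simp
next
  fix i assume "i \<in> {1..N}"
  then obtain w where w: "w \<in> V" "i \<in> snd \<sigma> {w}"
    using facet_label_exists[OF \<sigma>] by blast
  show "\<exists>!C. C \<in> comps V (E - fst (coarsen V E \<sigma> D)) \<and> i \<in> snd (coarsen V E \<sigma> D) C"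
  proof (rule ex1I[of _ "comp (E - D) w"])
    show "comp (E - D) w \<in> comps V (E - fst (coarsen V E \<sigma> D)) \<and>
          i \<in> snd (coarsen V E \<sigma> D) (comp (E - D) w)"
      using w by (simp add: coarsen_def comps_def) (rule bexI[of _ w]; simp)
  next
    fix C assume "C \<in> comps V (E - fst (coarsen V E \<sigma> D)) \<and> i \<in> snd (coarsen V E \<sigma> D) C"
    then obtain w' where C: "C \<in> comps V (E - D)" and w': "w' \<in> C" "i \<in> snd \<sigma> {w'}"
      by (auto simp: coarsen_def)
    have "w' \<in> V"
      using C w' comps_subset_V by blast
    then have "w' = w"
      using facet_label_unique[OF \<sigma> _ w(1) w'(2) w(2)] by simp
    obtain x where "C = comp (E - D) x"
      using C by (auto simp: comps_def)
    with w' \<open>w' = w\<close> show "C = comp (E - D) w"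
      using comp_eq_if_mem by metis
  qed
qed

lemma coarsen_le:
  assumes \<sigma>: "\<sigma> \<in> tfacets V E cap" and D: "D \<subseteq> E"
  shows "face_le V E (coarsen V E \<sigma> D) \<sigma>"
  unfolding face_le_def
proof (intro conjI ballI)
  show "fst (coarsen V E \<sigma> D) \<subseteq> fst \<sigma>"
    using D \<sigma> by (simp add: coarsen_def tfacets_def)
next
  fix C assume "C \<in> fcomps V E (coarsen V E \<sigma> D)"
  then have C: "C \<in> comps V (E - D)"
    by (simp add: coarsen_def fcomps_def)
  then have "C \<subseteq> V"
    using comps_subset_V by blast
  with C show "snd (coarsen V E \<sigma> D) C = \<Union> {snd \<sigma> C' |C'. C' \<in> fcomps V E \<sigma> \<and> C' \<subseteq> C}"
    by (auto simp: coarsen_def fcomps_facet[OF \<sigma>])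
qed

lemma face_eq_coarsen:
  assumes G: "G \<in> faces V E cap" and \<sigma>: "\<sigma> \<in> tfacets V E cap" and le: "face_le V E G \<sigma>"
  shows "G = coarsen V E \<sigma> (fst G)"
proof (rule prod_eqI)
  show "snd G = snd (coarsen V E \<sigma> (fst G))"
  proof
    fix C
    show "snd G C = snd (coarsen V E \<sigma> (fst G)) C"
    proof (cases "C \<in> comps V (E - fst G)")
      case True
      then have "C \<subseteq> V"
        using comps_subset_V by blast
      moreover have "snd G C = \<Union> {snd \<sigma> C' |C'. C' \<in> fcomps V E \<sigma> \<and> C' \<subseteq> C}"
        using le True unfolding face_le_def fcomps_def by blast
      ultimately show ?thesis
        using True by (simp add: coarsen_def fcomps_facet[OF \<sigma>] Union_over_singletons)
    next
      case False
      then show ?thesis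
        using G by (simp add: faces_iff coarsen_def)
    qed
  qed
qed (simp add: coarsen_def)

lemma le_coarsen:
  assumes G: "G \<in> faces V E cap" and \<sigma>: "\<sigma> \<in> tfacets V E cap" and le: "face_le V E G \<sigma>"
    and D: "fst G \<subseteq> D" "D \<subseteq> E"
  shows "face_le V E G (coarsen V E \<sigma> D)"
  unfolding face_le_def
proof (intro conjI ballI)
  show "fst G \<subseteq> fst (coarsen V E \<sigma> D)"
    using D by (simp add: coarsen_def)
next
  fix C assume "C \<in> fcomps V E G"
  then have C: "C \<in> comps V (E - fst G)"
    by (simp add: fcomps_def)
  have "snd G C = snd (coarsen V E \<sigma> (fst G)) C"
    using arg_cong[where f="\<lambda>X. snd X C", OF face_eq_coarsen[OF G \<sigma> le]] .
  also have "\<dots> = (\<Union>w\<in>C. snd \<sigma> {w})"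
    using C by (simp add: coarsen_def)
  finally have labels: "snd G C = (\<Union>w\<in>C. snd \<sigma> {w})" .
  obtain x where Cx: "C = comp (E - fst G) x"
    using C by (auto simp: comps_def)
  have sub: "comp (E - D) w \<subseteq> C" if "w \<in> C" for w
  proof -
    have "C = comp (E - fst G) w"
      using Cx that comp_eq_if_mem by metis
    then show ?thesis
      using comp_mono[of "E - D" "E - fst G" w] D(1) by blast
  qed
  have CV: "C \<subseteq> V"
    using C comps_subset_V by blast
  show "snd G C = \<Union> {snd (coarsen V E \<sigma> D) C' |C'. C' \<in> fcomps V E (coarsen V E \<sigma> D) \<and> C' \<subseteq> C}"
  proof (rule set_eqI, rule iffI)
    fix y assume "y \<in> snd G C"
    then obtain w where w: "w \<in> C" "y \<in> snd \<sigma> {w}"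
      using labels by auto
    have "w \<in> V"
      using w(1) CV by blast
    then have "comp (E - D) w \<in> fcomps V E (coarsen V E \<sigma> D)"
      and "y \<in> snd (coarsen V E \<sigma> D) (comp (E - D) w)"
      using w(2) by (simp_all add: fcomps_def coarsen_def comps_def) (rule bexI[of _ w]; simp)
    with sub[OF w(1)] show "y \<in> \<Union> {snd (coarsen V E \<sigma> D) C' |C'. C' \<in> fcomps V E (coarsen V E \<sigma> D) \<and> C' \<subseteq> C}"
      by blast
  next
    fix y assume "y \<in> \<Union> {snd (coarsen V E \<sigma> D) C' |C'. C' \<in> fcomps V E (coarsen V E \<sigma> D) \<and> C' \<subseteq> C}"
    then obtain C' where "C' \<in> comps V (E - D)" "C' \<subseteq> C" "y \<in> snd (coarsen V E \<sigma> D) C'"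
      by (auto simp: fcomps_def coarsen_def)
    then show "y \<in> snd G C"
      using labels by (auto simp: coarsen_def)
  qed
qed

lemma inv_props_on_E: "inv_props_on V E cap I E"
  using inversion_function unfolding inversion_function_def by blast

lemma ex1_inversion_free_facet:
  assumes "F \<in> faces V E cap"
  shows "\<exists>!\<sigma>. \<sigma> \<in> tfacets V E cap \<and> face_le V E F \<sigma> \<and> inversion_free_on V E I F \<sigma>"
  using inv_props_on_E assms unfolding inv_props_on_def inversion_free_on_def by simp

lemma trans_weak: "trans (weak\<^sup>+)"
  using inv_props_on_E by (simp add: inv_props_on_def)

lemma irrefl_weak: "irrefl (weak\<^sup>+)"
  using inv_props_on_E by (simp add: inv_props_on_def)

lemma coarsen_facet_self:
  assumes \<sigma>: "\<sigma> \<in> tfacets V E cap"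
  shows "coarsen V E \<sigma> E = \<sigma>"
proof (rule prod_eqI)
  show "snd (coarsen V E \<sigma> E) = snd \<sigma>"
  proof
    fix C
    show "snd (coarsen V E \<sigma> E) C = snd \<sigma> C"
      using facet_labels_outside[OF \<sigma>, of C] by (auto simp: coarsen_def comps_empty)
  qed
qed (use \<sigma> in \<open>simp add: coarsen_def tfacets_def\<close>)

lemma facets_of_faces: "facets_of (faces V E cap) (face_le V E) = tfacets V E cap"
proof (intro set_eqI iffI)
  fix F assume "F \<in> facets_of (faces V E cap) (face_le V E)"
  then have F: "F \<in> faces V E cap" and maximal: "\<And>G. G \<in> faces V E cap \<Longrightarrow> face_le V E F G \<Longrightarrow> G = F"
    unfolding facets_of_def by blast+
  obtain G where "G \<in> tfacets V E cap" "face_le V E F G"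
    using ex1_implies_ex[OF ex1_inversion_free_facet[OF F]] by blast
  with maximal show "F \<in> tfacets V E cap"
    unfolding tfacets_def by blast
next
  fix F assume F: "F \<in> tfacets V E cap"
  show "F \<in> facets_of (faces V E cap) (face_le V E)"
    unfolding facets_of_def mem_Collect_eq
  proof (intro conjI ballI impI)
    show "F \<in> faces V E cap"
      by (rule facet_in_faces[OF F])
    fix G assume G: "G \<in> faces V E cap" and le: "face_le V E F G"
    then have "G \<in> tfacets V E cap"
      using F faces_fst_subset[OF G] by (auto simp: tfacets_def face_le_def)
    then have "F = coarsen V E G E"
      using face_eq_coarsen[OF _ _ le] F by (simp add: tfacets_def)
    with \<open>G \<in> tfacets V E cap\<close> show "G = F"
      by (simp add: coarsen_facet_self)
  qed
qed

lemma inversions_nbrs: "F \<in> faces V E cap \<Longrightarrow> I F \<subseteq> nbrs V E F"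
  using inversion_function unfolding inversion_function_def by blast

lemma ex1_redist:
  assumes "\<tau> \<in> faces V E cap" "(C1, C2) \<in> nbrs V E \<tau>"
  shows "\<exists>!\<tau>'. \<tau>' \<in> redist V E cap \<tau> C1 C2 \<and> (C1, C2) \<notin> I \<tau>'"
  using inversion_function assms unfolding inversion_function_def by fast

lemma facet_inversion_edge:
  assumes \<sigma>: "\<sigma> \<in> tfacets V E cap" and ab: "(a, b) \<in> I \<sigma>"
  obtains u v where "a = {u}" "b = {v}" "u \<in> V" "v \<in> V" "{u, v} \<in> E"
proof -
  have "(a, b) \<in> nbrs V E \<sigma>"
    using inversions_nbrs[OF facet_in_faces[OF \<sigma>]] ab by blast
  then show thesis
    using that \<sigma> unfolding nbrs_def fcomps_facet[OF \<sigma>] by (auto simp: tfacets_def)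
qed

lemma swap_inv_facet:
  assumes \<sigma>: "\<sigma> \<in> tfacets V E cap" and ab: "(a, b) \<in> I \<sigma>"
  shows "swap_inv V E cap I \<sigma> a b \<in> tfacets V E cap"
    and "\<And>C. C \<noteq> a \<Longrightarrow> C \<noteq> b \<Longrightarrow> snd (swap_inv V E cap I \<sigma> a b) C = snd \<sigma> C"
proof -
  have "(a, b) \<in> nbrs V E \<sigma>"
    using inversions_nbrs[OF facet_in_faces[OF \<sigma>]] ab by blast
  then have "\<exists>!\<tau>'. \<tau>' \<in> redist V E cap \<sigma> a b \<and> (a, b) \<notin> I \<tau>'"
    by (rule ex1_redist[OF facet_in_faces[OF \<sigma>]])
  then have "swap_inv V E cap I \<sigma> a b \<in> redist V E cap \<sigma> a b"
    unfolding swap_inv_def by (rule theI'[THEN conjunct1])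
  then show "swap_inv V E cap I \<sigma> a b \<in> tfacets V E cap"
    and "\<And>C. C \<noteq> a \<Longrightarrow> C \<noteq> b \<Longrightarrow> snd (swap_inv V E cap I \<sigma> a b) C = snd \<sigma> C"
    using \<sigma> by (simp_all add: redist_def tfacets_def)
qed

lemma swap_inv_weak:
  "\<sigma> \<in> tfacets V E cap \<Longrightarrow> (a, b) \<in> I \<sigma> \<Longrightarrow> a \<union> b \<in> E \<Longrightarrow> (swap_inv V E cap I \<sigma> a b, \<sigma>) \<in> weak"
  unfolding weak_step_def by blast

lemma facet_labels_pair_eq:
  assumes \<sigma>: "\<sigma> \<in> tfacets V E cap" and \<sigma>': "\<sigma>' \<in> tfacets V E cap" and uv: "u \<in> V" "v \<in> V"
    and agree: "\<And>C. C \<noteq> {u} \<Longrightarrow> C \<noteq> {v} \<Longrightarrow> snd \<sigma>' C = snd \<sigma> C"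
  shows "snd \<sigma>' {u} \<union> snd \<sigma>' {v} = snd \<sigma> {u} \<union> snd \<sigma> {v}"
proof -
  have sub: "snd \<rho>' {u} \<union> snd \<rho>' {v} \<subseteq> snd \<rho> {u} \<union> snd \<rho> {v}"
    if \<rho>: "\<rho> \<in> tfacets V E cap" and \<rho>': "\<rho>' \<in> tfacets V E cap"
      and agree: "\<And>C. C \<noteq> {u} \<Longrightarrow> C \<noteq> {v} \<Longrightarrow> snd \<rho>' C = snd \<rho> C" for \<rho> \<rho>'
  proof
    fix i assume "i \<in> snd \<rho>' {u} \<union> snd \<rho>' {v}"
    then obtain z where z: "z \<in> {u, v}" "i \<in> snd \<rho>' {z}"
      by blast
    then have "z \<in> V"
      using uv by blast
    then have "i \<in> {1..N}"
      using z facet_labels_subset[OF \<rho>'] by blast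
    then obtain w where w: "w \<in> V" "i \<in> snd \<rho> {w}"
      using facet_label_exists[OF \<rho>] by blast
    show "i \<in> snd \<rho> {u} \<union> snd \<rho> {v}"
    proof (cases "w \<in> {u, v}")
      case False
      then have "i \<in> snd \<rho>' {w}"
        using w agree by auto
      then have "w = z"
        using facet_label_unique[OF \<rho>' w(1) \<open>z \<in> V\<close>] z by blast
      with False z show ?thesis
        by blast
    qed (use w in blast)
  qed
  show ?thesis
    using sub[OF \<sigma> \<sigma>' agree] sub[OF \<sigma>' \<sigma>] agree by (metis subset_antisym)
qed

lemma coarsen_eq_if_agree:
  assumes \<sigma>: "\<sigma> \<in> tfacets V E cap" and \<sigma>': "\<sigma>' \<in> tfacets V E cap" and uv: "u \<in> V" "v \<in> V"
    and agree: "\<And>C. C \<noteq> {u} \<Longrightarrow> C \<noteq> {v} \<Longrightarrow> snd \<sigma>' C = snd \<sigma> C"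
    and joined: "\<And>C. C \<in> comps V (E - D) \<Longrightarrow> u \<in> C \<longleftrightarrow> v \<in> C"
  shows "coarsen V E \<sigma> D = coarsen V E \<sigma>' D"
proof -
  have pair: "snd \<sigma>' {u} \<union> snd \<sigma>' {v} = snd \<sigma> {u} \<union> snd \<sigma> {v}"
    by (rule facet_labels_pair_eq[OF \<sigma> \<sigma>' uv agree])
  have "(\<Union>w\<in>C. snd \<sigma> {w}) = (\<Union>w\<in>C. snd \<sigma>' {w})" if C: "C \<in> comps V (E - D)" for C
  proof (cases "u \<in> C")
    case True
    then have "v \<in> C"
      using joined C by blast
    have "(\<Union>w\<in>C. snd \<sigma> {w}) = (\<Union>w\<in>C - {u, v}. snd \<sigma> {w}) \<union> (snd \<sigma> {u} \<union> snd \<sigma> {v})"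
      using True \<open>v \<in> C\<close> by blast
    also have "\<dots> = (\<Union>w\<in>C - {u, v}. snd \<sigma>' {w}) \<union> (snd \<sigma>' {u} \<union> snd \<sigma>' {v})"
    proof -
      have "snd \<sigma>' {w} = snd \<sigma> {w}" if "w \<in> C - {u, v}" for w
        using that by (intro agree) auto
      then show ?thesis
        using pair by simp
    qed
    also have "\<dots> = (\<Union>w\<in>C. snd \<sigma>' {w})"
      using True \<open>v \<in> C\<close> by blast
    finally show ?thesis .
  next
    case False
    then have "v \<notin> C"
      using joined C by blast
    have "snd \<sigma>' {w} = snd \<sigma> {w}" if "w \<in> C" for w
      using that False \<open>v \<notin> C\<close> by (intro agree) auto
    then show ?thesis
      by simp
  qed
  then show ?thesis
    unfolding coarsen_def by (simp add: fun_eq_iff)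
qed

lemma finite_tfacets: "finite (tfacets V E cap)"
proof (rule finite_subset)
  let ?L = "{L. \<forall>C. (C \<in> (\<lambda>v. {v}) ` V \<longrightarrow> L C \<in> Pow {1..N}) \<and> (C \<notin> (\<lambda>v. {v}) ` V \<longrightarrow> L C = {})}"
  show "tfacets V E cap \<subseteq> Pair E ` ?L"
  proof
    fix \<sigma> assume \<sigma>: "\<sigma> \<in> tfacets V E cap"
    then have "\<sigma> = (E, snd \<sigma>)"
      by (simp add: tfacets_def prod_eq_iff)
    moreover have "snd \<sigma> \<in> ?L"
      using facet_labels_subset[OF \<sigma>] facet_labels_outside[OF \<sigma>] by blast
    ultimately show "\<sigma> \<in> Pair E ` ?L"
      by (rule image_eqI)
  qed
  show "finite (Pair E ` ?L)"
    by (intro finite_imageI finite_set_of_finite_funs) (simp_all add: finite_V)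
qed

lemma wf_weak: "wf weak"
proof (rule finite_acyclic_wf)
  have "weak \<subseteq> tfacets V E cap \<times> tfacets V E cap"
    unfolding weak_step_def using swap_inv_facet(1) by blast
  then show "finite weak"
    using finite_tfacets finite_subset by blast
  show "acyclic weak"
    using irrefl_weak by (simp add: acyclic_def irrefl_def)
qed

lemma edge_is_bridge: "{u, v} \<in> E \<Longrightarrow> (u, v) \<notin> (adj (E - {{u, v}}))\<^sup>*"
  using tree unfolding is_tree_def by metis

lemma internal_edge_not_deleted:
  assumes "C \<in> comps V (E - D)" "u \<in> C" "v \<in> C" "{u, v} \<in> E"
  shows "{u, v} \<notin> D"
proof
  assume "{u, v} \<in> D"
  then have "adj (E - D) \<subseteq> adj (E - {{u, v}})"
    by (intro adj_mono) blast
  then have "(u, v) \<in> (adj (E - {{u, v}}))\<^sup>*"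
    using rtrancl_mono rtrancl_adj_if_mem_comps[OF assms(1-3)] by blast
  with edge_is_bridge[OF assms(4)] show False ..
qed

lemma inversion_free_facet_least:
  assumes G: "G \<in> faces V E cap"
    and \<tau>: "\<tau> \<in> tfacets V E cap" "face_le V E G \<tau>" "inversion_free_on V E I G \<tau>"
  shows "\<sigma> \<in> tfacets V E cap \<Longrightarrow> face_le V E G \<sigma> \<Longrightarrow> \<sigma> = \<tau> \<or> (\<tau>, \<sigma>) \<in> weak\<^sup>+"
  using wf_weak
proof (induction \<sigma> rule: wf_induct_rule)
  case (less \<sigma>)
  note \<sigma> = less.prems
  show ?case
  proof (cases "inversion_free_on V E I G \<sigma>")
    case True
    then show ?thesis
      using ex1_inversion_free_facet[OF G] \<sigma> \<tau> by blast
  next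
    case False
    then obtain a b C where ab: "(a, b) \<in> I \<sigma>" "a \<union> b \<in> E"
      and C: "C \<in> comps V (E - fst G)" "a \<subseteq> C" "b \<subseteq> C"
      unfolding inversion_free_on_def fcomps_def by blast
    obtain u v where uv: "a = {u}" "b = {v}" "u \<in> V" "v \<in> V"
      using facet_inversion_edge[OF \<sigma>(1) ab(1)] by blast
    define \<sigma>' where "\<sigma>' = swap_inv V E cap I \<sigma> a b"
    have \<sigma>': "\<sigma>' \<in> tfacets V E cap"
      unfolding \<sigma>'_def by (rule swap_inv_facet(1)[OF \<sigma>(1) ab(1)])
    have step: "(\<sigma>', \<sigma>) \<in> weak"
      unfolding \<sigma>'_def by (rule swap_inv_weak[OF \<sigma>(1) ab])
    have agree: "snd \<sigma>' C' = snd \<sigma> C'" if "C' \<noteq> {u}" "C' \<noteq> {v}" for C'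
      using swap_inv_facet(2)[OF \<sigma>(1) ab(1)] that uv by (simp add: \<sigma>'_def)
    have "(u, v) \<in> (adj (E - fst G))\<^sup>*"
      using rtrancl_adj_if_mem_comps[OF C(1)] C(2,3) uv by blast
    then have joined: "u \<in> C' \<longleftrightarrow> v \<in> C'" if "C' \<in> comps V (E - fst G)" for C'
      using that by (rule mem_comps_iff_if_rtrancl)
    have "coarsen V E \<sigma> (fst G) = coarsen V E \<sigma>' (fst G)"
      by (rule coarsen_eq_if_agree[OF \<sigma>(1) \<sigma>' uv(3,4) agree joined])
    with face_eq_coarsen[OF G \<sigma>] have "G = coarsen V E \<sigma>' (fst G)"
      by (rule trans)
    then have "face_le V E G \<sigma>'"
      using coarsen_le[OF \<sigma>' faces_fst_subset[OF G]] by (rule ssubst[where P = "\<lambda>X. face_le V E X \<sigma>'"])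
    then have "\<sigma>' = \<tau> \<or> (\<tau>, \<sigma>') \<in> weak\<^sup>+"
      by (rule less.IH[OF step \<sigma>'])
    with step show ?thesis
      by (auto intro: trancl_into_trancl)
  qed
qed

lemma not_inversion_free_below_other_facet:
  assumes "G \<in> faces V E cap" "face_le V E G \<tau>" and \<tau>: "\<tau> \<in> tfacets V E cap"
    and "\<sigma> \<in> tfacets V E cap" "face_le V E G \<sigma>" "\<sigma> \<noteq> \<tau>" "(\<tau>, \<sigma>) \<notin> weak\<^sup>+"
  shows "\<not> inversion_free_on V E I G \<tau>"
  using inversion_free_facet_least[OF assms(1) \<tau> assms(2) _ assms(4,5)] assms(6,7) by blast

lemma ridge_shared_with_weak_predecessor:
  assumes \<tau>: "\<tau> \<in> tfacets V E cap" and G: "G \<in> faces V E cap" "face_le V E G \<tau>"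
    and not_free: "\<not> inversion_free_on V E I G \<tau>"
  obtains \<tau>' H where "\<tau>' \<in> tfacets V E cap" "(\<tau>', \<tau>) \<in> weak"
    "H \<in> faces V E cap" "face_le V E H \<tau>" "face_le V E H \<tau>'" "face_le V E G H"
    "face_dim H = face_dim \<tau> - 1"
proof -
  obtain a b C where ab: "(a, b) \<in> I \<tau>" "a \<union> b \<in> E"
    and C: "C \<in> comps V (E - fst G)" "a \<subseteq> C" "b \<subseteq> C"
    using not_free unfolding inversion_free_on_def fcomps_def by blast
  obtain u v where uv: "a = {u}" "b = {v}" "u \<in> V" "v \<in> V" and e: "{u, v} \<in> E"
    using facet_inversion_edge[OF \<tau> ab(1)] by blast
  define D where "D = E - {{u, v}}"
  have "{u, v} \<notin> fst G"
    using internal_edge_not_deleted[OF C(1)] C(2,3) uv e by blast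
  then have GD: "fst G \<subseteq> D" "D \<subseteq> E"
    using faces_fst_subset[OF G(1)] by (auto simp: D_def)
  define \<tau>' where "\<tau>' = swap_inv V E cap I \<tau> a b"
  have \<tau>': "\<tau>' \<in> tfacets V E cap"
    unfolding \<tau>'_def by (rule swap_inv_facet(1)[OF \<tau> ab(1)])
  have step: "(\<tau>', \<tau>) \<in> weak"
    unfolding \<tau>'_def by (rule swap_inv_weak[OF \<tau> ab])
  define H where "H = coarsen V E \<tau> D"
  have agree: "snd \<tau>' C' = snd \<tau> C'" if "C' \<noteq> {u}" "C' \<noteq> {v}" for C'
    using swap_inv_facet(2)[OF \<tau> ab(1)] that uv by (simp add: \<tau>'_def)
  have "(u, v) \<in> (adj (E - D))\<^sup>*"
    using e by (intro r_into_rtrancl) (simp add: D_def adj_def)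
  then have joined: "u \<in> C' \<longleftrightarrow> v \<in> C'" if "C' \<in> comps V (E - D)" for C'
    using that by (rule mem_comps_iff_if_rtrancl)
  have "coarsen V E \<tau> D = coarsen V E \<tau>' D"
    by (rule coarsen_eq_if_agree[OF \<tau> \<tau>' uv(3,4) agree joined])
  then have "face_le V E H \<tau>'"
    using coarsen_le[OF \<tau>' GD(2)] by (simp add: H_def)
  moreover have "face_dim H = face_dim \<tau> - 1"
  proof -
    have "card E > 0"
      using e finite_E card_gt_0_iff by blast
    moreover have "card D = card E - 1"
      using e finite_E by (simp add: D_def card_Diff_singleton)
    ultimately show ?thesis
      using \<tau> by (simp add: H_def coarsen_def face_dim_def tfacets_def of_nat_diff)
  qed
  ultimately show thesis
    using that \<tau>' step coarsen_in_faces[OF \<tau> GD(2)] coarsen_le[OF \<tau> GD(2)] le_coarsen[OF G(1) \<tau> G(2) GD]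
    by (simp add: H_def)
qed

theorem shellable_faces: "shellable (faces V E cap) (face_le V E) face_dim"
proof -
  obtain Fs where Fs: "distinct Fs" "set Fs = tfacets V E cap"
    and weak_order: "\<And>i j. i < length Fs \<Longrightarrow> j < length Fs \<Longrightarrow> (Fs ! i, Fs ! j) \<in> weak\<^sup>+ \<Longrightarrow> i < j"
    using linear_extension_list[OF finite_tfacets trans_weak irrefl_weak] by blast
  let ?cl = "closure_of_face (faces V E cap) (face_le V E)"
  have "pure_of_dim (?cl (Fs ! k) \<inter> (\<Union>j<k. ?cl (Fs ! j))) (face_le V E) face_dim (face_dim (Fs ! k) - 1)"
    if k: "k < length Fs" for k
    unfolding pure_of_dim_def
  proof (intro ballI impI)
    let ?Q = "?cl (Fs ! k) \<inter> (\<Union>j<k. ?cl (Fs ! j))"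
    fix G assume "G \<in> ?Q" and maximal: "\<forall>H\<in>?Q. face_le V E G H \<longrightarrow> H = G"
    then obtain j where G: "G \<in> faces V E cap" "face_le V E G (Fs ! k)"
      and j: "j < k" "face_le V E G (Fs ! j)"
      unfolding closure_of_face_def by blast
    have \<tau>: "Fs ! k \<in> tfacets V E cap"
      using k Fs(2) nth_mem by blast
    have "j < length Fs"
      using j k by simp
    have "Fs ! j \<in> tfacets V E cap"
      using \<open>j < length Fs\<close> Fs(2) nth_mem by blast
    moreover have "Fs ! j \<noteq> Fs ! k" "(Fs ! k, Fs ! j) \<notin> weak\<^sup>+"
      using j(1) k \<open>j < length Fs\<close> Fs(1) weak_order nth_eq_iff_index_eq
      by (metis less_not_refl, metis less_asym)
    ultimately have "\<not> inversion_free_on V E I G (Fs ! k)"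
      using not_inversion_free_below_other_facet[OF G \<tau>] j(2) by blast
    then obtain \<tau>' H where \<tau>': "\<tau>' \<in> tfacets V E cap" "(\<tau>', Fs ! k) \<in> weak"
      and H: "H \<in> faces V E cap" "face_le V E H (Fs ! k)" "face_le V E H \<tau>'"
        "face_le V E G H" "face_dim H = face_dim (Fs ! k) - 1"
      by (rule ridge_shared_with_weak_predecessor[OF \<tau> G(1,2)])
    obtain j' where j': "j' < length Fs" "Fs ! j' = \<tau>'"
      using \<tau>'(1) Fs(2) by (metis in_set_conv_nth)
    then have "j' < k"
      using weak_order k \<tau>'(2) by blast
    then have "H \<in> ?Q"
      using H j' unfolding closure_of_face_def by blast
    with maximal H(4,5) show "face_dim G = face_dim (Fs ! k) - 1"
      by blast
  qed
  then have "is_shelling (faces V E cap) (face_le V E) face_dim Fs"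
    unfolding is_shelling_def facets_of_faces using Fs by blast
  then show ?thesis
    unfolding shellable_def by blast
qed

end

theorem mainTheorem3:
  fixes V :: "'v set" and E :: "'v set set" and cap :: "'v \<Rightarrow> nat"
  assumes "is_tree V E"
    and "\<exists>I. inversion_function V E cap I"
  shows "shellable (faces V E cap) (face_le V E) face_dim"
proof -
  obtain I where "inversion_function V E cap I"
    using assms(2) by blast
  with assms(1) interpret tree_with_inversion_function V E cap I
    by unfold_locales
  show ?thesis
    by (rule shellable_faces)
qed

end
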